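(* Let $C=6\pi/\sqrt2$. There is $\Gamma_0>0$ such that for all $\Gamma\in(0,\Gamma_0)$ the following holds. Let $\mathbb L\subset\mathbb Z^3$ be a lattice plaquette (unit square) and let $\theta_{\boldsymbol r'}$, $\boldsymbol r'\in\mathbb L$, be angles such that $|S^{(\gamma)}_{\boldsymbol r'}-S^{(\gamma)}_{\boldsymbol r''}|<\Gamma$ for each of the four bonds $(\boldsymbol r',\boldsymbol r'')$ of $\mathbb L$, with $\gamma$ the direction of that bond. Then for any $\boldsymbol r\in\mathbb L$, either all $\theta_{\boldsymbol r'}$, $\boldsymbol r'\in\mathbb L$, are within $C\sqrt\Gamma$ of $\theta_{\boldsymbol r}$, or there is a direction $\alpha$ among the two spanning $\mathbb L$ such that the neighbour $\boldsymbol r'$ of $\boldsymbol r$ with $\boldsymbol r'-\boldsymbol r\perp\hat{\mathrm e}_\alpha$ has $\theta_{\boldsymbol r'}$ within $C\sqrt\Gamma$ of $\theta_{\boldsymbol r}$ while the other two sites of $\mathbb L$ have angles within $C\sqrt\Gamma$ of $2\phi_\alpha-\theta_{\boldsymbol r}$ (the reflection of $\theta_{\boldsymbol r}$ through the $\alpha$-th of $\hat{\mathrm a},\hat{\mathrm b},\hat{\mathrm c}$). Angular distances are mod $2\pi$.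
   Context: $\boldsymbol S_{\boldsymbol r}=(\cos\theta_{\boldsymbol r},\sin\theta_{\boldsymbol r})$; $\hat{\mathrm a},\hat{\mathrm b},\hat{\mathrm c}$ are the unit vectors at angles $\phi_1=0,\phi_2=\tfrac{2\pi}3,\phi_3=-\tfrac{2\pi}3$ associated with lattice directions $\hat{\mathrm e}_1,\hat{\mathrm e}_2,\hat{\mathrm e}_3$, and $S^{(\gamma)}_{\boldsymbol r}=\cos(\theta_{\boldsymbol r}-\phi_\gamma)$. *)

theory Defs
  imports Complex_Main
begin

type_synonym site = "int \<times> int \<times> int"

definition sadd :: "site \<Rightarrow> site \<Rightarrow> site" where
  "sadd p q = (case p of (x1,y1,z1) \<Rightarrow> case q of (x2,y2,z2) \<Rightarrow> (x1+x2, y1+y2, z1+z2))"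

definition ssub :: "site \<Rightarrow> site \<Rightarrow> site" where
  "ssub p q = (case p of (x1,y1,z1) \<Rightarrow> case q of (x2,y2,z2) \<Rightarrow> (x1-x2, y1-y2, z1-z2))"

definition sdot :: "site \<Rightarrow> site \<Rightarrow> int" where
  "sdot p q = (case p of (x1,y1,z1) \<Rightarrow> case q of (x2,y2,z2) \<Rightarrow> x1*x2 + y1*y2 + z1*z2)"

definition edir :: "nat \<Rightarrow> site" where
  "edir g = (if g = 1 then (1,0,0) else if g = 2 then (0,1,0) else (0,0,1))"

text \<open>Angles phi_1 = 0, phi_2 = 2 pi/3, phi_3 = -2 pi/3 of the unit vectors a, b, c.\<close>
definition phi :: "nat \<Rightarrow> real" where
  "phi g = (if g = 1 then 0 else if g = 2 then 2*pi/3 else - (2*pi/3))"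

definition Sg :: "nat \<Rightarrow> real \<Rightarrow> real" where
  "Sg g th = cos (th - phi g)"

definition plaq :: "site \<Rightarrow> nat \<Rightarrow> nat \<Rightarrow> site set" where
  "plaq r0 a b = {r0, sadd r0 (edir a), sadd r0 (edir b), sadd (sadd r0 (edir a)) (edir b)}"

definition ang_close :: "real \<Rightarrow> real \<Rightarrow> real \<Rightarrow> bool" where
  "ang_close x y d \<longleftrightarrow> (\<exists>k::int. \<bar>x - y - 2*pi*of_int k\<bar> \<le> d)"

end

theory Submission
  imports Defs "HOL-Analysis.Convex"
begin

text \<open>
  Writing \<open>cos(x - p) - cos(y - p) = 2 sin((x + y)/2 - p) sin((y - x)/2)\<close>, a bond with
  energy difference below \<open>\<Gamma>\<close> forces one of the two sine factors below \<open>sqrt(\<Gamma>/2)\<close>;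
  by Jordan's inequality the neighbouring angle is then close to the angle itself or to its
  mirror image \<open>2 p - x\<close> in the bond axis. Going once around the plaquette composes two
  such maps in each of the two directions. A composition containing both mirrors
  \<open>R\<^sub>a, R\<^sub>b\<close> once or twice is a rotation by \<open>2(\<phi>\<^sub>a - \<phi>\<^sub>b)\<close> or \<open>4(\<phi>\<^sub>a - \<phi>\<^sub>b)\<close>,
  a nonzero multiple of \<open>2\<pi>/3\<close>, which cannot be approximately the identity; the
  consistent patterns left over are exactly the alternatives of the theorem. Each bond costs
  \<open>d = \<pi> sqrt(\<Gamma>/2)\<close> and the loop argument accumulates at most \<open>5 d\<close>, below
  \<open>6\<pi> sqrt(\<Gamma>/2) = C sqrt \<Gamma>\<close>.
\<close>

section \<open>Jordan's inequality\<close>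

lemma sin_concave_on: "concave_on {0..pi/2} sin"
  unfolding concave_on_def
  by (rule convex_on_realI[where f' = "\<lambda>x. - cos x"])
     (auto intro!: derivative_eq_intros cos_monotone_0_pi_le)

lemma Jordan_inequality:
  assumes "0 \<le> x" "x \<le> pi/2"
  shows "2/pi * x \<le> sin x"
  using concave_onD_Icc'[OF sin_concave_on, of x] assms by simp

lemma abs_sin_ge_Jordan:
  assumes "\<bar>x\<bar> \<le> pi/2"
  shows "2/pi * \<bar>x\<bar> \<le> \<bar>sin x\<bar>"
proof (cases "0 \<le> x")
  case True
  then show ?thesis using Jordan_inequality[of x] assms by simp
next
  case False
  then show ?thesis using Jordan_inequality[of "-x"] assms by simp
qed

lemma abs_sin_diff_int_pi: "\<bar>sin (x - of_int k * pi)\<bar> = \<bar>sin x\<bar>"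
proof -
  have "sin (of_int k * pi) = 0"
    using sin_zero_iff_int2 by blast
  then have "\<bar>cos (of_int k * pi)\<bar> = 1"
    using sin_cos_squared_add[of "of_int k * pi"] by (simp add: abs_square_eq_1)
  with \<open>sin (of_int k * pi) = 0\<close> show ?thesis
    by (simp add: sin_diff abs_mult)
qed

lemma abs_sin_le_imp_near_int_pi:
  assumes "\<bar>sin u\<bar> \<le> s"
  shows "\<exists>k::int. \<bar>u - of_int k * pi\<bar> \<le> pi/2 * s"
proof -
  define k where "k = \<lfloor>u/pi + 1/2\<rfloor>"
  have "of_int k \<le> u/pi + 1/2" "u/pi + 1/2 < of_int k + 1"
    unfolding k_def by linarith+
  then have "of_int k * pi \<le> u + pi/2" "u - pi/2 < of_int k * pi"
    using pi_gt_zero by (simp_all add: field_simps)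
  then have "\<bar>u - of_int k * pi\<bar> \<le> pi/2"
    unfolding abs_le_iff by linarith
  then have "2/pi * \<bar>u - of_int k * pi\<bar> \<le> s"
    using abs_sin_ge_Jordan abs_sin_diff_int_pi assms by (metis order_trans)
  then have "\<bar>u - of_int k * pi\<bar> \<le> pi/2 * s"
    using pi_gt_zero by (simp add: field_simps)
  then show ?thesis by blast
qed

section \<open>Closeness of angles modulo 2\<pi>\<close>

lemma ang_close_cong_diff: "ang_close x y d \<Longrightarrow> x - y = x' - y' \<Longrightarrow> ang_close x' y' d"
  unfolding ang_close_def by simp

lemma ang_close_refl: "0 \<le> d \<Longrightarrow> ang_close x x d"
  unfolding ang_close_def by (rule exI[of _ 0]) simp

lemma ang_close_sym: "ang_close x y d \<Longrightarrow> ang_close y x d"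
  unfolding ang_close_def
proof (elim exE)
  fix k :: int
  assume "\<bar>x - y - 2*pi * of_int k\<bar> \<le> d"
  then have "\<bar>y - x - 2*pi * of_int (- k)\<bar> \<le> d"
    by (simp add: abs_minus_commute)
  then show "\<exists>k::int. \<bar>y - x - 2*pi * of_int k\<bar> \<le> d" ..
qed

lemma ang_close_trans: "ang_close x y d \<Longrightarrow> ang_close y z e \<Longrightarrow> ang_close x z (d + e)"
  unfolding ang_close_def
proof (elim exE)
  fix k l :: int
  assume "\<bar>x - y - 2*pi * of_int k\<bar> \<le> d" "\<bar>y - z - 2*pi * of_int l\<bar> \<le> e"
  then have "\<bar>x - z - 2*pi * of_int (k + l)\<bar> \<le> d + e"
    by (simp add: abs_le_iff algebra_simps)
  then show "\<exists>k::int. \<bar>x - z - 2*pi * of_int k\<bar> \<le> d + e" ..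
qed

lemma ang_close_mono: "ang_close x y d \<Longrightarrow> d \<le> e \<Longrightarrow> ang_close x y e"
  unfolding ang_close_def by (meson order_trans)

lemma ang_close_common:
  assumes "ang_close z u d" "ang_close z v e" "u - v = u' - v'" "d + e \<le> f"
  shows "ang_close u' v' f"
  using ang_close_trans[OF ang_close_sym[OF assms(1)] assms(2)] assms(3,4)
  by (blast intro: ang_close_cong_diff ang_close_mono)

lemma ang_close_reflect_trans:
  assumes "ang_close z (2*p - y) d" "ang_close y x e"
  shows "ang_close z (2*p - x) (d + e)"
proof -
  have "ang_close (2*p - y) (2*p - x) e"
    using ang_close_sym[OF assms(2)] by (rule ang_close_cong_diff) simp
  with assms(1) show ?thesis
    by (rule ang_close_trans)
qed

lemma ang_close_third_turn_imp_dvd: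
  assumes "ang_close (of_int m * (2*pi/3)) 0 e" "e < 2*pi/3"
  shows "3 dvd m"
proof -
  obtain k :: int where "\<bar>of_int m * (2*pi/3) - 2*pi * of_int k\<bar> \<le> e"
    using assms(1) unfolding ang_close_def by auto
  also have "of_int m * (2*pi/3) - 2*pi * of_int k = of_int (m - 3*k) * (2*pi/3)"
    by (simp add: field_simps)
  also have "\<bar>of_int (m - 3*k) * (2*pi/3)\<bar> = \<bar>of_int (m - 3*k)\<bar> * (2*pi/3)"
    by (simp add: abs_mult)
  finally have "\<bar>of_int (m - 3*k)\<bar> * (2*pi/3) < 1 * (2*pi/3)"
    using assms(2) by linarith
  then have "\<bar>of_int (m - 3*k)\<bar> < (1::real)"
    using mult_right_less_imp_less pi_gt_zero by fastforce
  then have "\<bar>m - 3*k\<bar> < 1"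
    by linarith
  then show ?thesis by presburger
qed

lemma phi_diff_third_turn:
  assumes "a \<in> {1,2,3}" "b \<in> {1,2,3}" "a \<noteq> b"
  shows "\<exists>k::int \<in> {-2,-1,1,2}. phi a - phi b = of_int k * (2*pi/3)"
  using assms by (auto simp: phi_def)

lemma phi_multiples_apart:
  assumes "a \<in> {1,2,3}" "b \<in> {1,2,3}" "a \<noteq> b" "\<not> 3 dvd n" "e < 2*pi/3"
  shows "\<not> ang_close (of_int n * phi a) (of_int n * phi b) e"
proof
  obtain k :: int where k: "k \<in> {-2,-1,1,2}" "phi a - phi b = of_int k * (2*pi/3)"
    using phi_diff_third_turn[OF assms(1-3)] by blast
  have "of_int n * phi a - of_int n * phi b = of_int (n * k) * (2*pi/3) - 0"
    by (simp add: k(2) flip: right_diff_distrib)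
  moreover assume "ang_close (of_int n * phi a) (of_int n * phi b) e"
  ultimately have "3 dvd n * k"
    using ang_close_cong_diff ang_close_third_turn_imp_dvd assms(5) by blast
  with k(1) assms(4) show False
    by auto presburger+
qed

section \<open>Angles close up to a mirror image\<close>

definition mirror_close :: "real \<Rightarrow> real \<Rightarrow> real \<Rightarrow> real \<Rightarrow> bool" where
  "mirror_close p y x d \<longleftrightarrow> ang_close y x d \<or> ang_close y (2*p - x) d"

lemma mirror_close_sym: "mirror_close p y x d \<Longrightarrow> mirror_close p x y d"
  unfolding mirror_close_def
  using ang_close_sym ang_close_cong_diff[of y "2*p - x" d x "2*p - y"] by auto

lemma mirror_close_mono: "mirror_close p y x d \<Longrightarrow> d \<le> e \<Longrightarrow> mirror_close p y x e"
  unfolding mirror_close_def using ang_close_mono by blast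

lemma mirror_close_trans:
  assumes "mirror_close p z y d" "ang_close y x e"
  shows "mirror_close p z x (d + e)"
  using assms ang_close_trans ang_close_reflect_trans unfolding mirror_close_def by blast

lemma mirror_close_two_axes:
  assumes "mirror_close A z x e" "mirror_close B z x e"
    and "\<not> ang_close (2*A) (2*B) f" "2*e \<le> f"
  shows "ang_close z x e"
proof (rule ccontr)
  assume "\<not> ang_close z x e"
  with assms(1,2) have "ang_close z (2*A - x) e" "ang_close z (2*B - x) e"
    unfolding mirror_close_def by blast+
  then have "ang_close (2*A) (2*B) f"
    by (rule ang_close_common) (use assms(4) in simp_all)
  with assms(3) show False ..
qed

lemma abs_sin_half_diff_le_imp_ang_close:
  assumes "\<bar>sin ((u - v)/2)\<bar> \<le> s"
  shows "ang_close u v (pi * s)"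
proof -
  obtain k :: int where "\<bar>(u - v)/2 - of_int k * pi\<bar> \<le> pi/2 * s"
    using abs_sin_le_imp_near_int_pi[OF assms] by blast
  moreover have "u - v - 2*pi * of_int k = 2 * ((u - v)/2 - of_int k * pi)"
    by (simp add: field_simps)
  ultimately have "\<bar>u - v - 2*pi * of_int k\<bar> \<le> pi * s"
    by (simp only: abs_mult) simp
  then show ?thesis
    unfolding ang_close_def by blast
qed

lemma cos_diff_le_imp_mirror_close:
  assumes "\<bar>cos (x - p) - cos (y - p)\<bar> \<le> 2 * s\<^sup>2" "0 \<le> s"
  shows "mirror_close p y x (pi * s)"
proof -
  have "cos (x - p) - cos (y - p) = 2 * sin (((x - p) + (y - p))/2) * sin (((y - p) - (x - p))/2)"
    by (rule cos_diff_cos)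
  also have "\<dots> = 2 * sin ((y - (2*p - x))/2) * sin ((y - x)/2)"
    by (simp add: algebra_simps)
  finally have "\<bar>sin ((y - (2*p - x))/2)\<bar> * \<bar>sin ((y - x)/2)\<bar> \<le> s * s"
    using assms(1) by (simp add: abs_mult power2_eq_square)
  then have "\<bar>sin ((y - (2*p - x))/2)\<bar> \<le> s \<or> \<bar>sin ((y - x)/2)\<bar> \<le> s"
    using mult_strict_mono[of s "\<bar>sin ((y - (2*p - x))/2)\<bar>" s "\<bar>sin ((y - x)/2)\<bar>"] assms(2)
    by force
  then show ?thesis
    unfolding mirror_close_def using abs_sin_half_diff_le_imp_ang_close by blast
qed

lemma mirror_loop_straight_side:
  assumes y: "mirror_close A y x d" and z_y: "mirror_close B z y d"
    and z_x: "mirror_close A z x (d + d)"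
    and sep: "\<not> ang_close (2*A) (2*B) (6*d)" and "0 \<le> d"
  shows "(ang_close y x (3*d) \<and> ang_close z x (3*d)) \<or>
         (ang_close y (2*A - x) (3*d) \<and> ang_close z (2*A - x) (3*d))"
proof -
  have m: "ang_close u v e \<Longrightarrow> e \<le> 3*d \<Longrightarrow> ang_close u v (3*d)" for u v e
    by (rule ang_close_mono)
  consider (yx) "ang_close y x d" | (yA) "ang_close y (2*A - x) d"
    using y unfolding mirror_close_def by blast
  then show ?thesis
  proof cases
    case yx
    have "ang_close z x (d + d)"
      using mirror_close_two_axes[OF z_x mirror_close_trans[OF z_y yx] sep] \<open>0 \<le> d\<close> by simp
    with yx show ?thesis
      using m \<open>0 \<le> d\<close> by simp
  next
    case yA
    consider (zA) "ang_close z (2*A - x) (d + d)" | (zx) "ang_close z x (d + d)"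
      using z_x unfolding mirror_close_def by blast
    then show ?thesis
    proof cases
      case zA
      with yA show ?thesis
        using m \<open>0 \<le> d\<close> by simp
    next
      case zx
      have "mirror_close A y x (d + (d + d))"
        by (rule mirror_close_mono[OF y]) (use \<open>0 \<le> d\<close> in simp)
      moreover have "mirror_close B y x (d + (d + d))"
        by (rule mirror_close_trans[OF mirror_close_sym[OF z_y] zx])
      ultimately have "ang_close y x (d + (d + d))"
        using mirror_close_two_axes sep \<open>0 \<le> d\<close> by simp
      with zx show ?thesis
        using m \<open>0 \<le> d\<close> by simp
    qed
  qed
qed

lemma mirror_loop_reflected_sides:
  assumes y: "ang_close y (2*A - x) d" and w: "ang_close w (2*B - x) d"
    and z_y: "mirror_close B z y d" and z_w: "mirror_close A z w d"
    and sep2: "\<not> ang_close (2*A) (2*B) (6*d)" and sep4: "\<not> ang_close (4*A) (4*B) (6*d)"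
    and "0 \<le> d"
  shows "(ang_close w x (5*d) \<and> ang_close y (2*A - x) (5*d) \<and> ang_close z (2*A - x) (5*d)) \<or>
         (ang_close y x (5*d) \<and> ang_close w (2*B - x) (5*d) \<and> ang_close z (2*B - x) (5*d))"
proof -
  have m: "ang_close u v e \<Longrightarrow> e \<le> 5*d \<Longrightarrow> ang_close u v (5*d)" for u v e
    by (rule ang_close_mono)
  from mirror_close_trans[OF z_y y] mirror_close_trans[OF z_w w] consider
      (AB) "ang_close z (2*A - x) (d + d)" "ang_close z (2*B - x) (d + d)"
    | (AA) "ang_close z (2*A - x) (d + d)" "ang_close z (2*A - (2*B - x)) (d + d)"
    | (BB) "ang_close z (2*B - (2*A - x)) (d + d)" "ang_close z (2*B - x) (d + d)"
    | (BA) "ang_close z (2*B - (2*A - x)) (d + d)" "ang_close z (2*A - (2*B - x)) (d + d)"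
    unfolding mirror_close_def by blast
  then show ?thesis
  proof cases
    case AB
    have "ang_close (2*A) (2*B) (6*d)"
      by (rule ang_close_common[OF AB]) (use \<open>0 \<le> d\<close> in simp_all)
    with sep2 show ?thesis ..
  next
    case AA
    have "ang_close (2*B - x) x (4*d)"
      by (rule ang_close_common[OF AA]) simp_all
    with w have "ang_close w x (5*d)"
      using ang_close_trans by fastforce
    with AA y show ?thesis
      using m \<open>0 \<le> d\<close> by simp
  next
    case BB
    have "ang_close (2*A - x) x (4*d)"
      by (rule ang_close_common[OF BB(2) BB(1)]) simp_all
    with y have "ang_close y x (5*d)"
      using ang_close_trans by fastforce
    with BB w show ?thesis
      using m \<open>0 \<le> d\<close> by simp
  next
    case BA
    have "ang_close (4*A) (4*B) (6*d)"
      by (rule ang_close_common[OF BA(2) BA(1)]) (use \<open>0 \<le> d\<close> in simp_all)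
    with sep4 show ?thesis ..
  qed
qed

lemma mirror_loop:
  assumes y: "mirror_close A y x d" and z_y: "mirror_close B z y d"
    and z_w: "mirror_close A z w d" and w: "mirror_close B w x d"
    and sep2: "\<not> ang_close (2*A) (2*B) (6*d)" and sep4: "\<not> ang_close (4*A) (4*B) (6*d)"
    and "0 \<le> d"
  shows "(ang_close y x (5*d) \<and> ang_close w x (5*d) \<and> ang_close z x (5*d)) \<or>
         (ang_close w x (5*d) \<and> ang_close y (2*A - x) (5*d) \<and> ang_close z (2*A - x) (5*d)) \<or>
         (ang_close y x (5*d) \<and> ang_close w (2*B - x) (5*d) \<and> ang_close z (2*B - x) (5*d))"
proof -
  have m: "ang_close u v e \<Longrightarrow> e \<le> 5*d \<Longrightarrow> ang_close u v (5*d)" for u v e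
    by (rule ang_close_mono)
  consider (wx) "ang_close w x d" | (yx) "ang_close y x d"
    | (reflected) "ang_close y (2*A - x) d" "ang_close w (2*B - x) d"
    using y w unfolding mirror_close_def by blast
  then show ?thesis
  proof cases
    case wx
    from mirror_loop_straight_side[OF y z_y mirror_close_trans[OF z_w wx] sep2 \<open>0 \<le> d\<close>] wx
    show ?thesis
      using m \<open>0 \<le> d\<close> by auto
  next
    case yx
    have "\<not> ang_close (2*B) (2*A) (6*d)"
      using sep2 ang_close_sym by blast
    from mirror_loop_straight_side[OF w z_w mirror_close_trans[OF z_y yx] this \<open>0 \<le> d\<close>] yx
    show ?thesis
      using m \<open>0 \<le> d\<close> by auto
  next
    case reflected
    from mirror_loop_reflected_sides[OF reflected z_y z_w sep2 sep4 \<open>0 \<le> d\<close>]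
    show ?thesis by blast
  qed
qed

section \<open>The plaquette\<close>

(* Indexing the corners by two booleans makes (\<not> i, j) and (i, \<not> j) the neighbours of
   corner (i, j) across its a- and b-bond, so every corner can play the role of r0. *)
definition plaq_corner :: "site \<Rightarrow> nat \<Rightarrow> nat \<Rightarrow> bool \<Rightarrow> bool \<Rightarrow> site" where
  "plaq_corner r0 a b i j =
     sadd (sadd r0 (if i then edir a else (0,0,0))) (if j then edir b else (0,0,0))"

lemma sadd_zero [simp]: "sadd p (0,0,0) = p"
  by (cases p) (simp add: sadd_def)

lemma sdot_ssub: "sdot (ssub p q) e = sdot p e - sdot q e"
  by (cases p; cases q; cases e) (simp add: sdot_def ssub_def algebra_simps)

lemma mem_plaq_iff_corner: "r \<in> plaq r0 a b \<longleftrightarrow> (\<exists>i j. r = plaq_corner r0 a b i j)"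
  unfolding plaq_def plaq_corner_def by (auto simp: all_bool_eq ex_bool_eq)

lemma plaq_corner_in_plaq: "plaq_corner r0 a b i j \<in> plaq r0 a b"
  using mem_plaq_iff_corner by blast

lemma ball_plaq_iff_corners:
  "(\<forall>r\<in>plaq r0 a b. P r) \<longleftrightarrow>
     P (plaq_corner r0 a b i j) \<and> P (plaq_corner r0 a b (\<not> i) j) \<and>
     P (plaq_corner r0 a b i (\<not> j)) \<and> P (plaq_corner r0 a b (\<not> i) (\<not> j))"
proof -
  have "(\<forall>r\<in>plaq r0 a b. P r) \<longleftrightarrow> (\<forall>i j. P (plaq_corner r0 a b i j))"
    unfolding Ball_def mem_plaq_iff_corner by blast
  then show ?thesis
    by (cases i; cases j) (auto simp: all_bool_eq)
qed

lemma plaq_corner_step: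
  "plaq_corner r0 a b True j = sadd (plaq_corner r0 a b False j) (edir a)"
  "plaq_corner r0 a b i True = sadd (plaq_corner r0 a b i False) (edir b)"
  by (cases r0; cases "edir a"; cases "edir b"; simp add: plaq_corner_def sadd_def)+

lemma sdot_plaq_corner:
  assumes "a \<in> {1,2,3}" "b \<in> {1,2,3}" "a \<noteq> b"
  shows "sdot (plaq_corner r0 a b i j) (edir a) = sdot r0 (edir a) + of_bool i"
    and "sdot (plaq_corner r0 a b i j) (edir b) = sdot r0 (edir b) + of_bool j"
  using assms by (cases r0; auto simp: plaq_corner_def sadd_def sdot_def edir_def)+

lemma sdot_plaq_corner_diff_eq_0_iff:
  assumes "a \<in> {1,2,3}" "b \<in> {1,2,3}" "a \<noteq> b"
  shows "sdot (ssub (plaq_corner r0 a b i' j') (plaq_corner r0 a b i j)) (edir a) = 0 \<longleftrightarrow> i' = i"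
    and "sdot (ssub (plaq_corner r0 a b i' j') (plaq_corner r0 a b i j)) (edir b) = 0 \<longleftrightarrow> j' = j"
  by (simp_all add: sdot_ssub sdot_plaq_corner[OF assms])

lemma plaq_bonds_mirror_close:
  assumes ab: "a \<in> {1,2,3}" "b \<in> {1,2,3}"
    and bonds: "\<forall>r1\<in>plaq r0 a b. \<forall>r2\<in>plaq r0 a b. \<forall>g\<in>{1,2,3}.
                  r2 = sadd r1 (edir g) \<longrightarrow> \<bar>Sg g (\<theta> r1) - Sg g (\<theta> r2)\<bar> < \<Gamma>"
    and s: "\<Gamma> \<le> 2 * s\<^sup>2" "0 \<le> s"
  shows "mirror_close (phi a) (\<theta> (plaq_corner r0 a b (\<not> i) j)) (\<theta> (plaq_corner r0 a b i j)) (pi * s)"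
    and "mirror_close (phi b) (\<theta> (plaq_corner r0 a b i (\<not> j))) (\<theta> (plaq_corner r0 a b i j)) (pi * s)"
proof -
  have bond: "mirror_close (phi g) (\<theta> r2) (\<theta> r1) (pi * s)"
    if "r1 \<in> plaq r0 a b" "r2 \<in> plaq r0 a b" "g \<in> {1,2,3}" "r2 = sadd r1 (edir g)" for r1 r2 g
  proof (rule cos_diff_le_imp_mirror_close)
    have "\<bar>Sg g (\<theta> r1) - Sg g (\<theta> r2)\<bar> < \<Gamma>"
      using bonds that by blast
    then show "\<bar>cos (\<theta> r1 - phi g) - cos (\<theta> r2 - phi g)\<bar> \<le> 2 * s\<^sup>2"
      using s(1) unfolding Sg_def by linarith
  qed (rule s(2))
  have "mirror_close (phi a) (\<theta> (plaq_corner r0 a b True j)) (\<theta> (plaq_corner r0 a b False j)) (pi * s)"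
    by (rule bond[OF plaq_corner_in_plaq plaq_corner_in_plaq ab(1) plaq_corner_step(1)])
  then show "mirror_close (phi a) (\<theta> (plaq_corner r0 a b (\<not> i) j)) (\<theta> (plaq_corner r0 a b i j)) (pi * s)"
    by (cases i) (auto intro: mirror_close_sym)
  have "mirror_close (phi b) (\<theta> (plaq_corner r0 a b i True)) (\<theta> (plaq_corner r0 a b i False)) (pi * s)"
    by (rule bond[OF plaq_corner_in_plaq plaq_corner_in_plaq ab(2) plaq_corner_step(2)])
  then show "mirror_close (phi b) (\<theta> (plaq_corner r0 a b i (\<not> j))) (\<theta> (plaq_corner r0 a b i j)) (pi * s)"
    by (cases j) (auto intro: mirror_close_sym)
qed

lemma plaquette_alignment:
  fixes \<theta> :: "site \<Rightarrow> real"
  assumes ab: "a \<in> {1,2,3}" "b \<in> {1,2,3}" "a \<noteq> b"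
    and bond_a: "\<And>i j. mirror_close (phi a)
                    (\<theta> (plaq_corner r0 a b (\<not> i) j)) (\<theta> (plaq_corner r0 a b i j)) d"
    and bond_b: "\<And>i j. mirror_close (phi b)
                    (\<theta> (plaq_corner r0 a b i (\<not> j))) (\<theta> (plaq_corner r0 a b i j)) d"
    and d: "0 \<le> d" "6*d < 2*pi/3" "5*d \<le> D"
    and r: "r \<in> plaq r0 a b"
  shows "(\<forall>r'\<in>plaq r0 a b. ang_close (\<theta> r') (\<theta> r) D)
           \<or> (\<exists>\<alpha>\<in>{a,b}. \<forall>r'\<in>plaq r0 a b. r' \<noteq> r \<longrightarrow>
                (sdot (ssub r' r) (edir \<alpha>) = 0 \<longrightarrow> ang_close (\<theta> r') (\<theta> r) D) \<and>
                (sdot (ssub r' r) (edir \<alpha>) \<noteq> 0 \<longrightarrow> ang_close (\<theta> r') (2 * phi \<alpha> - \<theta> r) D))"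
proof -
  obtain i j where r: "r = plaq_corner r0 a b i j"
    using r mem_plaq_iff_corner by blast
  have "\<not> ang_close (2 * phi a) (2 * phi b) (6*d)" "\<not> ang_close (4 * phi a) (4 * phi b) (6*d)"
    using phi_multiples_apart[OF ab, of 2 "6*d"] phi_multiples_apart[OF ab, of 4 "6*d"] d(2)
    by simp_all
  from mirror_loop[OF bond_a[of i j] bond_b[of "\<not> i" j] bond_a[of i "\<not> j"] bond_b[of i j] this d(1)]
  have "(\<forall>r'\<in>plaq r0 a b. ang_close (\<theta> r') (\<theta> r) (5*d)) \<or>
        (\<forall>r'\<in>plaq r0 a b. r' \<noteq> r \<longrightarrow>
           (sdot (ssub r' r) (edir a) = 0 \<longrightarrow> ang_close (\<theta> r') (\<theta> r) (5*d)) \<and>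
           (sdot (ssub r' r) (edir a) \<noteq> 0 \<longrightarrow> ang_close (\<theta> r') (2 * phi a - \<theta> r) (5*d))) \<or>
        (\<forall>r'\<in>plaq r0 a b. r' \<noteq> r \<longrightarrow>
           (sdot (ssub r' r) (edir b) = 0 \<longrightarrow> ang_close (\<theta> r') (\<theta> r) (5*d)) \<and>
           (sdot (ssub r' r) (edir b) \<noteq> 0 \<longrightarrow> ang_close (\<theta> r') (2 * phi b - \<theta> r) (5*d)))"
    unfolding ball_plaq_iff_corners[where i = i and j = j] r
    using ang_close_refl[of "5*d"] d(1) by (simp add: sdot_plaq_corner_diff_eq_0_iff[OF ab]) blast
  then show ?thesis
    using ang_close_mono[OF _ d(3)] by blast
qed

theorem lemma6p7:
  "\<exists>\<Gamma>0>0. \<forall>\<Gamma>. 0 < \<Gamma> \<and> \<Gamma> < \<Gamma>0 \<longrightarrow>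
     (\<forall>(r0::site) (a::nat) (b::nat) (\<theta>::site \<Rightarrow> real).
        a \<in> {1,2,3} \<and> b \<in> {1,2,3} \<and> a \<noteq> b \<and>
        (\<forall>r1\<in>plaq r0 a b. \<forall>r2\<in>plaq r0 a b. \<forall>g\<in>{1,2,3}.
            r2 = sadd r1 (edir g) \<longrightarrow> \<bar>Sg g (\<theta> r1) - Sg g (\<theta> r2)\<bar> < \<Gamma>)
        \<longrightarrow>
        (\<forall>r\<in>plaq r0 a b.
           (\<forall>r'\<in>plaq r0 a b. ang_close (\<theta> r') (\<theta> r) (6*pi/sqrt 2 * sqrt \<Gamma>))
           \<or> (\<exists>\<alpha>\<in>{a,b}. \<forall>r'\<in>plaq r0 a b. r' \<noteq> r \<longrightarrow>
                (sdot (ssub r' r) (edir \<alpha>) = 0 \<longrightarrow>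
                   ang_close (\<theta> r') (\<theta> r) (6*pi/sqrt 2 * sqrt \<Gamma>)) \<and>
                (sdot (ssub r' r) (edir \<alpha>) \<noteq> 0 \<longrightarrow>
                   ang_close (\<theta> r') (2 * phi \<alpha> - \<theta> r) (6*pi/sqrt 2 * sqrt \<Gamma>)))))"
proof (rule exI[of _ "1/50"], intro conjI allI impI ballI, simp, elim conjE, goal_cases)
  case (1 \<Gamma> r0 a b \<theta> r)
  note r = 1(1) and \<Gamma> = 1(2,3) and ab = 1(4-6) and bonds = 1(7)
  define s where "s = sqrt (\<Gamma>/2)"
  have s: "0 \<le> s" "\<Gamma> \<le> 2 * s\<^sup>2"
    using \<Gamma>(1) by (simp_all add: s_def)
  have "s < 1/10"
    unfolding s_def using \<Gamma>(2) by (intro real_less_lsqrt) (simp_all add: power_divide)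
  have "6*pi/sqrt 2 * sqrt \<Gamma> = 6 * (pi * s)"
    by (simp add: s_def real_sqrt_divide)
  then have "0 \<le> pi * s" "6 * (pi * s) < 2*pi/3" "5 * (pi * s) \<le> 6*pi/sqrt 2 * sqrt \<Gamma>"
    using s(1) \<open>s < 1/10\<close> pi_gt_zero by simp_all
  from plaquette_alignment[OF ab plaq_bonds_mirror_close[OF ab(1,2) bonds s(2,1)] this r]
  show ?case .
qed

end
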